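(* Let $d>K\ge1$, $\mathbf Q\in\mathrm{St}(d,K)$, $\lambda_1>\dots>\lambda_K>0$, $\boldsymbol\Theta=\mathrm{diag}(\sqrt{\lambda_1},\dots,\sqrt{\lambda_K})$, $a_1>\dots>a_K>0$, $g(\mathbf X)=\mathrm{tr}(\mathbf X^\top\mathbf Q\boldsymbol\Theta^2\mathbf Q^\top\mathbf X\,\mathrm{diag}(a_1,\dots,a_K))$. Let $\delta_3\in(0,\tfrac{\sqrt2}{2})$ and $\eta>0$ be such that $d_F(\mathbf X,\mathbf Q)\le\eta\|\mathrm{grad}\,g(\mathbf X)\|_F$ for all $\mathbf X\in\mathrm{St}(d,K)$ with $d_F(\mathbf X,\mathbf Q)\le\delta_3$. Then there exists $\beta_1\in(0,\tfrac23\delta_3)$ such that $$g(\mathbf Q)-g(\mathbf X)\ge\frac{1}{4\eta}d_F^2(\mathbf X,\mathbf Q)\quad\text{for all }\mathbf X\in\mathrm{St}(d,K)\text{ with }d_F(\mathbf X,\mathbf Q)\le\beta_1.$$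
   Context: $\mathrm{St}(d,K)=\{\mathbf X\in\mathbb R^{d\times K}:\mathbf X^\top\mathbf X=\mathbf I_K\}$. $d_F(\mathbf X,\mathbf Q)=\min_{\mathbf q\in\{1,-1\}^K}\|\mathbf X-\mathbf Q\,\mathrm{diag}(\mathbf q)\|_F$. $\nabla g(\mathbf X)=2\mathbf Q\boldsymbol\Theta^2\mathbf Q^\top\mathbf X\,\mathrm{diag}(a_1,\dots,a_K)$ is the Euclidean gradient and $\mathrm{grad}\,g(\mathbf X)=(\mathbf I_d-\tfrac12\mathbf X\mathbf X^\top)(\nabla g(\mathbf X)-\mathbf X\nabla g(\mathbf X)^\top\mathbf X)$. (Such $\delta_3,\eta$ are known to exist.) *)

theory Defs
  imports "Jordan_Normal_Form.Matrix"
begin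

definition mat_trace :: "real mat \<Rightarrow> real" where
  "mat_trace A = (\<Sum>i<dim_row A. A $$ (i, i))"

definition frob :: "real mat \<Rightarrow> real" where
  "frob A = sqrt (\<Sum>i<dim_row A. \<Sum>j<dim_col A. (A $$ (i, j))\<^sup>2)"

definition stiefel :: "nat \<Rightarrow> nat \<Rightarrow> real mat set" where
  "stiefel d K = {X. X \<in> carrier_mat d K \<and> transpose_mat X * X = 1\<^sub>m K}"

definition dF :: "nat \<Rightarrow> real mat \<Rightarrow> real mat \<Rightarrow> real" where
  "dF K X Q = Min {frob (X - Q * mat_diag K (\<lambda>i. q ! i)) | q. q \<in> lists {1, -1} \<and> length q = K}"

definition Theta :: "nat \<Rightarrow> (nat \<Rightarrow> real) \<Rightarrow> real mat" where
  "Theta K lam = mat_diag K (\<lambda>i. sqrt (lam i))"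

definition gfun :: "nat \<Rightarrow> real mat \<Rightarrow> (nat \<Rightarrow> real) \<Rightarrow> (nat \<Rightarrow> real) \<Rightarrow> real mat \<Rightarrow> real" where
  "gfun K Q lam a X = mat_trace (transpose_mat X * Q * (Theta K lam * Theta K lam)
       * transpose_mat Q * X * mat_diag K a)"

definition egrad :: "nat \<Rightarrow> real mat \<Rightarrow> (nat \<Rightarrow> real) \<Rightarrow> (nat \<Rightarrow> real) \<Rightarrow> real mat \<Rightarrow> real mat" where
  "egrad K Q lam a X = 2 \<cdot>\<^sub>m (Q * (Theta K lam * Theta K lam) * transpose_mat Q * X * mat_diag K a)"

definition rgrad :: "nat \<Rightarrow> nat \<Rightarrow> real mat \<Rightarrow> (nat \<Rightarrow> real) \<Rightarrow> (nat \<Rightarrow> real) \<Rightarrow> real mat \<Rightarrow> real mat" where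
  "rgrad d K Q lam a X =
     (1\<^sub>m d - (1/2) \<cdot>\<^sub>m (X * transpose_mat X)) *
     (egrad K Q lam a X - X * transpose_mat (egrad K Q lam a X) * X)"

end

(*
  The error bound forces spectral gaps, and the spectral gaps alone give quadratic growth of g
  on all of St(d,K).

  Gaps: let v be a unit vector orthogonal to the columns of Q, and for j < K let G be the Givens
  rotation by a small angle in the coordinate plane (j, j+1) of the frame [Q v]. Test the error
  bound at X = [Q v] G [I; 0]: for j + 1 < K this rotates two columns of Q into each other, for
  j = K - 1 it tilts the last column of Q towards v. Both d_F(X,Q) and grad g(X) are explicit
  there (the gradient is equivariant under isometries, so it can be evaluated in dimension K + 1),
  and comparing them yields
    (a_j - a_(j+1)) (lam_j - lam_(j+1)) >= 1/eta   and   a_K lam_K >= 1/(2 eta).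

  Growth: P_ik = ((Q^T X)_ik)^2 is doubly substochastic by Bessel's inequality,
  g(X) = sum_k a_k sum_i lam_i P_ik and d_F(X,Q)^2 <= 2 sum_k (1 - P_kk). With m = 1/(2 eta),
  g(Q) - g(X) >= m sum_k (1 - P_kk) is a linear inequality in P that the gaps make provable by
  a dual certificate. Hence beta_1 = delta_3 / 3 works.
*)
theory Submission
  imports Defs
begin

section \<open>Matrices and the Frobenius norm\<close>

lemma assoc_mult_mat_dim:
  "dim_col (A :: real mat) = dim_row B \<Longrightarrow> dim_col B = dim_row C \<Longrightarrow> A * B * C = A * (B * C)"
  by (rule assoc_mult_mat[of _ "dim_row A" "dim_col A" _ "dim_col B" _ "dim_col C"]) auto

lemma mult_minus_distrib_mat_dim:
  "dim_col (A :: real mat) = dim_row B \<Longrightarrow> dim_row B = dim_row C \<Longrightarrow> dim_col B = dim_col C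
    \<Longrightarrow> A * (B - C) = A * B - A * C"
  by (rule mult_minus_distrib_mat[of _ "dim_row A" "dim_col A" _ "dim_col B"]) auto

lemma minus_mult_distrib_mat_dim:
  "dim_col (A :: real mat) = dim_row C \<Longrightarrow> dim_row A = dim_row B \<Longrightarrow> dim_col A = dim_col B
    \<Longrightarrow> (A - B) * C = A * C - B * C"
  by (rule minus_mult_distrib_mat[of _ "dim_row A" "dim_col A" _ _ "dim_col C"]) auto

lemma mult_smult_distrib_dim:
  "dim_col (A :: real mat) = dim_row B \<Longrightarrow> A * (k \<cdot>\<^sub>m B) = k \<cdot>\<^sub>m (A * B)"
  by (rule mult_smult_distrib[of _ "dim_row A" "dim_col A" _ "dim_col B"]) auto

lemma mult_smult_assoc_mat_dim:
  "dim_col (A :: real mat) = dim_row B \<Longrightarrow> (k \<cdot>\<^sub>m A) * B = k \<cdot>\<^sub>m (A * B)"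
  by (rule mult_smult_assoc_mat[of _ "dim_row A" "dim_col A" _ "dim_col B"]) auto

lemma transpose_mult_dim:
  "dim_col (A :: real mat) = dim_row B \<Longrightarrow> (A * B)\<^sup>T = B\<^sup>T * A\<^sup>T"
  by (rule transpose_mult[of _ "dim_row A" "dim_col A" _ "dim_col B"]) auto

lemma transpose_minus_dim:
  "dim_row (A :: real mat) = dim_row B \<Longrightarrow> dim_col A = dim_col B \<Longrightarrow> (A - B)\<^sup>T = A\<^sup>T - B\<^sup>T"
  by (rule eq_matI) simp_all

lemma dim_mat_diag [simp]: "dim_row (mat_diag n f) = n" "dim_col (mat_diag n f) = n"
  unfolding mat_diag_def by simp_all

lemma dim_Theta [simp]: "dim_row (Theta K lam) = K" "dim_col (Theta K lam) = K"
  unfolding Theta_def by simp_all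

lemma dim_egrad [simp]:
  "dim_row (egrad K Q lam a X) = dim_row Q" "dim_col (egrad K Q lam a X) = K"
  unfolding egrad_def by simp_all

lemma dim_rgrad [simp]:
  "dim_row (rgrad d K Q lam a X) = dim_row X" "dim_col (rgrad d K Q lam a X) = dim_col X"
  unfolding rgrad_def by simp_all

lemma transpose_mat_diag: "(mat_diag n f)\<^sup>T = mat_diag n f"
  by (rule eq_matI) (auto simp: mat_diag_def)

lemma index_mult_mat_sum:
  "i < dim_row A \<Longrightarrow> j < dim_col B \<Longrightarrow> dim_col A = dim_row B \<Longrightarrow>
    (A * B) $$ (i, j) = (\<Sum>p<dim_col A. A $$ (i, p) * B $$ (p, j))"
  by (auto simp: scalar_prod_def atLeast0LessThan intro!: sum.cong)

lemma index_transpose_mult_self: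
  "j < dim_col (M :: real mat) \<Longrightarrow> (M\<^sup>T * M) $$ (j, j) = (\<Sum>i<dim_row M. (M $$ (i, j))\<^sup>2)"
  by (subst index_mult_mat_sum) (simp_all add: power2_eq_square)

lemma frob_nonneg: "0 \<le> frob M"
  unfolding frob_def by (simp add: sum_nonneg)

lemma frob_sq: "(frob M)\<^sup>2 = (\<Sum>i<dim_row M. \<Sum>j<dim_col M. (M $$ (i, j))\<^sup>2)"
  unfolding frob_def by (simp add: sum_nonneg)

lemma frob_sq_eq_trace_gram: "(frob (M :: real mat))\<^sup>2 = (\<Sum>j<dim_col M. (M\<^sup>T * M) $$ (j, j))"
proof -
  have "(\<Sum>j<dim_col M. (M\<^sup>T * M) $$ (j, j)) = (\<Sum>j<dim_col M. \<Sum>i<dim_row M. (M $$ (i, j))\<^sup>2)"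
    by (rule sum.cong) (simp_all only: index_transpose_mult_self lessThan_iff)
  then show ?thesis
    unfolding frob_sq by (simp add: sum.swap[of _ "{..<dim_col M}"])
qed

lemma frob_mult_isometry:
  assumes U: "dim_row U = d" "dim_col U = n" "U\<^sup>T * U = 1\<^sub>m n" and M: "dim_row M = n"
  shows "frob (U * M) = frob M"
proof -
  have "U\<^sup>T * (U * M) = M"
    using U M by (simp add: assoc_mult_mat_dim[symmetric])
  then have "(U * M)\<^sup>T * (U * M) = M\<^sup>T * M"
    using U M by (simp add: transpose_mult_dim assoc_mult_mat_dim)
  then have "(frob (U * M))\<^sup>2 = (frob M)\<^sup>2"
    by (simp add: frob_sq_eq_trace_gram)
  then show ?thesis
    using frob_nonneg by simp
qed

section \<open>The Stiefel manifold\<close>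

lemma stiefel_iff: "X \<in> stiefel d K \<longleftrightarrow> dim_row X = d \<and> dim_col X = K \<and> X\<^sup>T * X = 1\<^sub>m K"
  unfolding stiefel_def carrier_mat_def by auto

lemma stiefel_col_sq_sum:
  assumes "X \<in> stiefel d K" "k < K"
  shows "(\<Sum>i<d. (X $$ (i, k))\<^sup>2) = 1"
  using index_transpose_mult_self[of k X] assms by (auto simp: stiefel_iff simp del: index_mult_mat(1))

lemma transpose_mult_isometry:
  fixes U P Y :: "real mat"
  assumes "dim_row U = d" "dim_col U = n" "U\<^sup>T * U = 1\<^sub>m n" "dim_row P = n" "dim_row Y = n"
  shows "(U * P)\<^sup>T * (U * Y) = P\<^sup>T * Y"
proof -
  have "U\<^sup>T * (U * Y) = Y"
    using assms by (simp add: assoc_mult_mat_dim[symmetric])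
  then show ?thesis
    using assms by (simp add: transpose_mult_dim assoc_mult_mat_dim)
qed

lemma stiefel_mult:
  assumes "U \<in> stiefel d n" "Y \<in> stiefel n K"
  shows "U * Y \<in> stiefel d K"
  using assms transpose_mult_isometry[of U d n Y Y] by (simp add: stiefel_iff)

lemma bessel_inequality_col:
  assumes Y: "Y \<in> stiefel n K" and Z: "dim_row Z = n" and j: "j < dim_col Z"
  shows "(\<Sum>k<K. ((Y\<^sup>T * Z) $$ (k, j))\<^sup>2) \<le> (\<Sum>i<n. (Z $$ (i, j))\<^sup>2)"
proof -
  define W where "W = Y\<^sup>T * Z"
  define M where "M = Z - Y * W"
  have Yd: "dim_row Y = n" "dim_col Y = K" "Y\<^sup>T * Y = 1\<^sub>m K"
    using Y by (simp_all add: stiefel_iff)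
  have Wd: "dim_row W = K" "dim_col W = dim_col Z"
    unfolding W_def using Yd by simp_all
  have ZY: "Z\<^sup>T * Y = W\<^sup>T"
    unfolding W_def using Yd Z by (simp add: transpose_mult_dim)
  have "Z\<^sup>T * (Y * W) = W\<^sup>T * W" "W\<^sup>T * (Y\<^sup>T * (Y * W)) = W\<^sup>T * W"
    using Yd Z Wd by (simp_all add: ZY assoc_mult_mat_dim[symmetric])
  then have MM: "M\<^sup>T * M = Z\<^sup>T * Z - W\<^sup>T * W"
    unfolding M_def using Yd Z Wd
    by (simp add: transpose_minus_dim transpose_mult_dim mult_minus_distrib_mat_dim
        minus_mult_distrib_mat_dim assoc_mult_mat_dim W_def[symmetric]) (rule eq_matI; simp)
  have Md: "dim_col M = dim_col Z"
    unfolding M_def using Wd by simp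
  have "0 \<le> (M\<^sup>T * M) $$ (j, j)"
    using index_transpose_mult_self[of j M] j Md by (simp add: sum_nonneg del: index_mult_mat(1))
  also have "\<dots> = (Z\<^sup>T * Z) $$ (j, j) - (W\<^sup>T * W) $$ (j, j)"
    unfolding MM using j Wd by (subst index_minus_mat) auto
  finally show ?thesis
    using index_transpose_mult_self[of j Z] index_transpose_mult_self[of j W] Yd Wd j Z
    unfolding W_def by (simp del: index_mult_mat(1))
qed

lemma stiefel_cross_col_sq_sum_le:
  assumes X: "X \<in> stiefel d K" and Q: "Q \<in> stiefel d K" and k: "k < K"
  shows "(\<Sum>i<K. ((Q\<^sup>T * X) $$ (i, k))\<^sup>2) \<le> 1"
  using bessel_inequality_col[OF Q, of X k] stiefel_col_sq_sum[OF X k] X k by (simp add: stiefel_iff)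

lemma stiefel_cross_row_sq_sum_le:
  assumes X: "X \<in> stiefel d K" and Q: "Q \<in> stiefel d K" and i: "i < K"
  shows "(\<Sum>k<K. ((Q\<^sup>T * X) $$ (i, k))\<^sup>2) \<le> 1"
proof -
  have "X\<^sup>T * Q = (Q\<^sup>T * X)\<^sup>T"
    using X Q by (simp add: transpose_mult_dim stiefel_iff)
  then have "(Q\<^sup>T * X) $$ (i, k) = (X\<^sup>T * Q) $$ (k, i)" if "k < K" for k
    using X Q i that by (simp add: stiefel_iff del: index_mult_mat(1))
  then show ?thesis
    using stiefel_cross_col_sq_sum_le[OF Q X i] by simp
qed

lemma orthogonal_complement_projector:
  assumes Q: "Q \<in> stiefel d K"
  defines "P \<equiv> 1\<^sub>m d - Q * Q\<^sup>T"
  shows "Q\<^sup>T * P = 0\<^sub>m K d" and "P\<^sup>T * P = P" and "(\<Sum>j<d. P $$ (j, j)) = real d - real K"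
proof -
  have Qd: "dim_row Q = d" "dim_col Q = K" "Q\<^sup>T * Q = 1\<^sub>m K"
    using Q by (simp_all add: stiefel_iff)
  have Pd: "dim_row P = d" "dim_col P = d"
    unfolding P_def using Qd by simp_all
  show QtP: "Q\<^sup>T * P = 0\<^sub>m K d"
  proof -
    have "Q\<^sup>T * (Q * Q\<^sup>T) = Q\<^sup>T"
      using Qd by (simp add: assoc_mult_mat_dim[symmetric])
    then have "Q\<^sup>T * P = Q\<^sup>T - Q\<^sup>T"
      unfolding P_def using Qd by (simp add: mult_minus_distrib_mat_dim)
    also have "\<dots> = 0\<^sub>m K d"
      using Qd by (intro eq_matI) simp_all
    finally show ?thesis .
  qed
  have "P\<^sup>T = P"
    unfolding P_def using Qd by (simp add: transpose_minus_dim transpose_mult_dim)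
  moreover have "P * P = P"
  proof -
    have "P * P = P - Q * (Q\<^sup>T * P)"
      unfolding P_def using Qd
      by (subst (1) minus_mult_distrib_mat_dim) (simp_all add: assoc_mult_mat_dim)
    then show ?thesis
      using Qd Pd by (simp add: QtP eq_matI)
  qed
  ultimately show "P\<^sup>T * P = P"
    by simp
  have "(\<Sum>j<d. P $$ (j, j)) = (\<Sum>j<d. 1 - (\<Sum>k<K. (Q $$ (j, k))\<^sup>2))"
  proof (rule sum.cong[OF refl])
    fix i assume "i \<in> {..<d}"
    then show "P $$ (i, i) = 1 - (\<Sum>k<K. (Q $$ (i, k))\<^sup>2)"
      unfolding P_def using Qd
      by (subst index_minus_mat) (simp_all add: index_mult_mat_sum power2_eq_square del: index_mult_mat(1))
  qed
  also have "\<dots> = real d - (\<Sum>k<K. \<Sum>j<d. (Q $$ (j, k))\<^sup>2)"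
    by (simp add: sum_subtractf sum.swap[of _ "{..<K}"])
  also have "\<dots> = real d - real K"
    using stiefel_col_sq_sum[OF Q] by simp
  finally show "(\<Sum>j<d. P $$ (j, j)) = real d - real K" .
qed

text \<open>A column of the projector onto the orthogonal complement of the columns of \<open>Q\<close> is
  nonzero since its trace is \<open>d - K > 0\<close>.\<close>
lemma exists_unit_orthogonal_to_cols:
  assumes Q: "Q \<in> stiefel d K" and Kd: "K < d"
  obtains x :: "nat \<Rightarrow> real"
  where "(\<Sum>i<d. (x i)\<^sup>2) = 1" and "\<And>k. k < K \<Longrightarrow> (\<Sum>i<d. Q $$ (i, k) * x i) = 0"
proof -
  define P where "P = 1\<^sub>m d - Q * Q\<^sup>T"
  have Qd: "dim_row Q = d" "dim_col Q = K"
    using Q by (simp_all add: stiefel_iff)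
  have Pd: "dim_row P = d" "dim_col P = d"
    unfolding P_def using Qd by simp_all
  note P = orthogonal_complement_projector[OF Q, folded P_def]
  obtain j where j: "j < d" and Pjj: "0 < P $$ (j, j)"
  proof (rule ccontr)
    assume "\<not> thesis"
    then have "(\<Sum>j<d. P $$ (j, j)) \<le> 0"
      using that by (force intro: sum_nonpos)
    then show False
      using P(3) Kd by simp
  qed
  define x where "x i = P $$ (i, j) / sqrt (P $$ (j, j))" for i
  show thesis
  proof
    have "(\<Sum>i<d. (P $$ (i, j))\<^sup>2) = P $$ (j, j)"
      using index_transpose_mult_self[of j P] P(2) j Pd by (simp del: index_mult_mat(1))
    then show "(\<Sum>i<d. (x i)\<^sup>2) = 1"
      unfolding x_def using Pjj by (simp add: power_divide sum_divide_distrib[symmetric])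
  next
    fix k assume k: "k < K"
    have "(\<Sum>i<d. Q $$ (i, k) * P $$ (i, j)) = (Q\<^sup>T * P) $$ (k, j)"
      using k j Qd Pd by (simp add: index_mult_mat_sum del: index_mult_mat(1))
    then have "(\<Sum>i<d. Q $$ (i, k) * P $$ (i, j)) = 0"
      using k j by (simp add: P(1) del: index_mult_mat(1))
    then show "(\<Sum>i<d. Q $$ (i, k) * x i) = 0"
      unfolding x_def by (simp add: sum_divide_distrib[symmetric])
  qed
qed

lemma stiefel_extend_col:
  assumes Q: "Q \<in> stiefel d K" and Kd: "K < d"
  shows "\<exists>U \<in> stiefel d (Suc K). \<forall>i<d. \<forall>k<K. U $$ (i, k) = Q $$ (i, k)"
proof -
  obtain x where x_norm: "(\<Sum>i<d. (x i)\<^sup>2) = 1" and x_orth: "\<And>k. k < K \<Longrightarrow> (\<Sum>i<d. Q $$ (i, k) * x i) = 0"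
    using exists_unit_orthogonal_to_cols[OF Q Kd] by blast
  have Qd: "dim_row Q = d" "dim_col Q = K" "Q\<^sup>T * Q = 1\<^sub>m K"
    using Q by (simp_all add: stiefel_iff)
  define U where "U = mat d (Suc K) (\<lambda>(i, k). if k < K then Q $$ (i, k) else x i)"
  have "U\<^sup>T * U = 1\<^sub>m (Suc K)"
  proof (rule eq_matI)
    fix p q assume "p < dim_row (1\<^sub>m (Suc K) :: real mat)" "q < dim_col (1\<^sub>m (Suc K) :: real mat)"
    then have p: "p < Suc K" and q: "q < Suc K"
      by simp_all
    define c where "c k i = (if k < K then Q $$ (i, k) else x i)" for k i
    have "(U\<^sup>T * U) $$ (p, q) = (\<Sum>i<d. c p i * c q i)"
      unfolding U_def using p q by (simp add: index_mult_mat_sum c_def del: index_mult_mat(1))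
    also have "\<dots> = (1\<^sub>m (Suc K) :: real mat) $$ (p, q)"
    proof (cases "p < K"; cases "q < K")
      assume "p < K" "q < K"
      then show ?thesis
        using Qd index_mult_mat_sum[of p "Q\<^sup>T" q Q] by (simp add: c_def del: index_mult_mat(1))
    next
      assume "p < K" "\<not> q < K"
      then show ?thesis
        using x_orth q by (simp add: c_def)
    next
      assume "\<not> p < K" "q < K"
      then show ?thesis
        using x_orth[of q] p by (simp add: c_def mult.commute)
    next
      assume "\<not> p < K" "\<not> q < K"
      then show ?thesis
        using x_norm p q by (simp add: c_def power2_eq_square)
    qed
    finally show "(U\<^sup>T * U) $$ (p, q) = (1\<^sub>m (Suc K) :: real mat) $$ (p, q)" .
  qed (simp_all add: U_def)
  then have "U \<in> stiefel d (Suc K)"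
    by (simp add: stiefel_iff U_def)
  moreover have "\<forall>i<d. \<forall>k<K. U $$ (i, k) = Q $$ (i, k)"
    by (simp add: U_def)
  ultimately show ?thesis
    by blast
qed

section \<open>Distance up to column signs\<close>

abbreviation sign_vecs :: "nat \<Rightarrow> real list set" where
  "sign_vecs K \<equiv> {q. set q \<subseteq> {1, -1} \<and> length q = K}"

lemma dF_eq_Min:
  "dF K X Q = Min ((\<lambda>q. frob (X - Q * mat_diag K (\<lambda>i. q ! i))) ` sign_vecs K)"
  unfolding dF_def by (rule arg_cong[where f = Min]) (auto simp: in_lists_conv_set)

lemma finite_sign_vecs: "finite (sign_vecs K)" and replicate_sign_vecs: "replicate K 1 \<in> sign_vecs K"
  using finite_lists_length_eq[of "{1, -1 :: real}" K] by auto

lemma dF_nonneg: "0 \<le> dF K X Q"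
  unfolding dF_eq_Min using finite_sign_vecs[of K] replicate_sign_vecs[of K]
  by (subst Min_ge_iff) (auto simp: frob_nonneg)

lemma sign_vecs_nth: "q \<in> sign_vecs K \<Longrightarrow> k < K \<Longrightarrow> q ! k = 1 \<or> q ! k = -1"
  using nth_mem[of k q] by blast

lemma frob_sq_sign_flip:
  assumes X: "X \<in> stiefel d K" and Q: "Q \<in> stiefel d K" and q: "q \<in> sign_vecs K"
  shows "(frob (X - Q * mat_diag K (\<lambda>i. q ! i)))\<^sup>2 = (\<Sum>k<K. 2 - 2 * q ! k * (Q\<^sup>T * X) $$ (k, k))"
proof -
  have Xd: "dim_row X = d" "dim_col X = K" and Qd: "dim_row Q = d" "dim_col Q = K"
    using X Q by (simp_all add: stiefel_iff)
  have "Q * mat_diag K (\<lambda>i. q ! i) = mat d K (\<lambda>(i, k). Q $$ (i, k) * q ! k)"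
    using Qd by (intro mat_diag_mult_right) auto
  then have "(frob (X - Q * mat_diag K (\<lambda>i. q ! i)))\<^sup>2
      = (\<Sum>k<K. \<Sum>i<d. (X $$ (i, k) - Q $$ (i, k) * q ! k)\<^sup>2)"
    using Xd by (simp add: frob_sq sum.swap[of _ "{..<d}"])
  also have "\<dots> = (\<Sum>k<K. 2 - 2 * q ! k * (Q\<^sup>T * X) $$ (k, k))"
  proof (rule sum.cong[OF refl])
    fix k assume k: "k \<in> {..<K}"
    have "q ! k = 1 \<or> q ! k = -1"
      using sign_vecs_nth[OF q] k by simp
    then have "(q ! k)\<^sup>2 = 1"
      by auto
    moreover have "(Q\<^sup>T * X) $$ (k, k) = (\<Sum>i<d. Q $$ (i, k) * X $$ (i, k))"
      using Xd Qd k by (simp add: index_mult_mat_sum del: index_mult_mat(1))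
    moreover have "(\<Sum>i<d. (X $$ (i, k) - Q $$ (i, k) * q ! k)\<^sup>2)
        = (\<Sum>i<d. (X $$ (i, k))\<^sup>2) - 2 * q ! k * (\<Sum>i<d. Q $$ (i, k) * X $$ (i, k))
          + (q ! k)\<^sup>2 * (\<Sum>i<d. (Q $$ (i, k))\<^sup>2)"
      by (simp add: power2_eq_square algebra_simps sum.distrib sum_subtractf sum_distrib_left)
    ultimately show "(\<Sum>i<d. (X $$ (i, k) - Q $$ (i, k) * q ! k)\<^sup>2) = 2 - 2 * q ! k * (Q\<^sup>T * X) $$ (k, k)"
      using stiefel_col_sq_sum[OF X] stiefel_col_sq_sum[OF Q] k by simp
  qed
  finally show ?thesis .
qed

lemma dF_sq:
  assumes X: "X \<in> stiefel d K" and Q: "Q \<in> stiefel d K"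
  shows "(dF K X Q)\<^sup>2 = (\<Sum>k<K. 2 - 2 * \<bar>(Q\<^sup>T * X) $$ (k, k)\<bar>)"
proof -
  let ?B = "Q\<^sup>T * X"
  let ?f = "\<lambda>q. frob (X - Q * mat_diag K (\<lambda>i. q ! i))"
  have fin: "finite (?f ` sign_vecs K)" and ne: "?f ` sign_vecs K \<noteq> {}"
    using finite_sign_vecs[of K] replicate_sign_vecs[of K] by auto
  have lower: "(\<Sum>k<K. 2 - 2 * \<bar>?B $$ (k, k)\<bar>) \<le> (?f q)\<^sup>2" if q: "q \<in> sign_vecs K" for q
    unfolding frob_sq_sign_flip[OF X Q q]
  proof (rule sum_mono)
    fix k assume "k \<in> {..<K}"
    then have "q ! k = 1 \<or> q ! k = -1"
      using sign_vecs_nth[OF q] by simp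
    then show "2 - 2 * \<bar>?B $$ (k, k)\<bar> \<le> 2 - 2 * q ! k * ?B $$ (k, k)"
      by (auto simp: abs_if)
  qed
  define q0 where "q0 = map (\<lambda>k. if 0 \<le> ?B $$ (k, k) then 1 else -1 :: real) [0..<K]"
  have q0: "q0 \<in> sign_vecs K"
    unfolding q0_def by auto
  have attained: "(?f q0)\<^sup>2 = (\<Sum>k<K. 2 - 2 * \<bar>?B $$ (k, k)\<bar>)"
    unfolding frob_sq_sign_flip[OF X Q q0] by (rule sum.cong) (auto simp: q0_def)
  obtain q where q: "q \<in> sign_vecs K" and dF_q: "dF K X Q = ?f q"
    using Min_in[OF fin ne] unfolding dF_eq_Min by auto
  have "dF K X Q \<le> ?f q0"
    unfolding dF_eq_Min using fin q0 by (intro Min_le) auto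
  then have "?f q \<le> ?f q0"
    unfolding dF_q .
  then have "(?f q)\<^sup>2 \<le> (?f q0)\<^sup>2"
    using frob_nonneg by (rule power_mono)
  then show ?thesis
    using lower[OF q] attained unfolding dF_q by linarith
qed

lemma dF_sq_le_diag:
  assumes X: "X \<in> stiefel d K" and Q: "Q \<in> stiefel d K"
  shows "(dF K X Q)\<^sup>2 \<le> 2 * (\<Sum>k<K. 1 - ((Q\<^sup>T * X) $$ (k, k))\<^sup>2)"
proof -
  have "2 - 2 * \<bar>(Q\<^sup>T * X) $$ (k, k)\<bar> \<le> 2 * (1 - ((Q\<^sup>T * X) $$ (k, k))\<^sup>2)" if k: "k < K" for k
  proof -
    have "((Q\<^sup>T * X) $$ (k, k))\<^sup>2 \<le> (\<Sum>i<K. ((Q\<^sup>T * X) $$ (i, k))\<^sup>2)"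
      using k by (intro member_le_sum) auto
    then have "((Q\<^sup>T * X) $$ (k, k))\<^sup>2 \<le> 1"
      using stiefel_cross_col_sq_sum_le[OF X Q k] by linarith
    then have "\<bar>(Q\<^sup>T * X) $$ (k, k)\<bar> \<le> 1"
      by (simp add: abs_square_le_1)
    then have "((Q\<^sup>T * X) $$ (k, k))\<^sup>2 \<le> \<bar>(Q\<^sup>T * X) $$ (k, k)\<bar>"
      by (metis abs_ge_zero mult_left_le_one_le power2_abs power2_eq_square)
    then show ?thesis
      by simp
  qed
  then show ?thesis
    unfolding dF_sq[OF X Q] sum_distrib_left by (intro sum_mono) simp
qed

section \<open>Quadratic growth from spectral gaps\<close>

lemma sum_atLeastLessThan_telescope:
  fixes f :: "nat \<Rightarrow> real"
  shows "i \<le> k \<Longrightarrow> (\<Sum>j\<in>{i..<k}. f j - f (Suc j)) = f i - f k"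
  using sum_Suc_diff'[of i k f] by (simp add: sum_subtractf)

lemma sum_gaps_lower:
  fixes a lam t :: "nat \<Rightarrow> real"
  assumes a: "\<forall>i j. i \<le> j \<longrightarrow> j < K \<longrightarrow> a j \<le> a i"
    and lam: "\<forall>i j. i \<le> j \<longrightarrow> j < K \<longrightarrow> lam j \<le> lam i"
    and t: "\<forall>j. Suc j < K \<longrightarrow> a (Suc j) * (lam j - lam (Suc j)) + m \<le> t j"
    and ik: "i \<le> k" "k < K"
  shows "a k * (lam i - lam k) + real (k - i) * m \<le> (\<Sum>j\<in>{i..<k}. t j)"
proof -
  have "(\<Sum>j\<in>{i..<k}. a k * (lam j - lam (Suc j)) + m) \<le> (\<Sum>j\<in>{i..<k}. t j)"
  proof (rule sum_mono)
    fix j assume "j \<in> {i..<k}"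
    then have j: "Suc j \<le> k"
      by simp
    then have "a k * (lam j - lam (Suc j)) \<le> a (Suc j) * (lam j - lam (Suc j))"
      using a lam ik by (intro mult_right_mono) auto
    moreover have "a (Suc j) * (lam j - lam (Suc j)) + m \<le> t j"
      using t j ik by simp
    ultimately show "a k * (lam j - lam (Suc j)) + m \<le> t j"
      by linarith
  qed
  moreover have "(\<Sum>j\<in>{i..<k}. a k * (lam j - lam (Suc j)) + m) = a k * (lam i - lam k) + real (k - i) * m"
    using ik by (simp only: sum.distrib sum_distrib_left[symmetric] sum_atLeastLessThan_telescope) simp
  ultimately show ?thesis
    by simp
qed

lemma sum_gaps_upper:
  fixes a lam t :: "nat \<Rightarrow> real"
  assumes a: "\<forall>i j. i \<le> j \<longrightarrow> j < K \<longrightarrow> a j \<le> a i"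
    and lam: "\<forall>i j. i \<le> j \<longrightarrow> j < K \<longrightarrow> lam j \<le> lam i"
    and t: "\<forall>j. Suc j < K \<longrightarrow> t j \<le> a j * (lam j - lam (Suc j)) - m"
    and ki: "k \<le> i" "i < K"
  shows "(\<Sum>j\<in>{k..<i}. t j) \<le> a k * (lam k - lam i) - real (i - k) * m"
proof -
  have "(\<Sum>j\<in>{k..<i}. t j) \<le> (\<Sum>j\<in>{k..<i}. a k * (lam j - lam (Suc j)) - m)"
  proof (rule sum_mono)
    fix j assume "j \<in> {k..<i}"
    then have j: "k \<le> j" "Suc j < K"
      using ki by auto
    then have "a j * (lam j - lam (Suc j)) \<le> a k * (lam j - lam (Suc j))"
      using a lam by (intro mult_right_mono) auto
    moreover have "t j \<le> a j * (lam j - lam (Suc j)) - m"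
      using t j by simp
    ultimately show "t j \<le> a k * (lam j - lam (Suc j)) - m"
      by linarith
  qed
  moreover have "(\<Sum>j\<in>{k..<i}. a k * (lam j - lam (Suc j)) - m) = a k * (lam k - lam i) - real (i - k) * m"
    using ki
    by (simp only: sum_subtractf[of "\<lambda>j. a k * (lam j - lam (Suc j))" "\<lambda>_. m"]
        sum_distrib_left[symmetric] sum_atLeastLessThan_telescope) simp
  ultimately show ?thesis
    by simp
qed

lemma sum_atLeastLessThan_diff_tail:
  fixes t :: "nat \<Rightarrow> real"
  assumes "i \<le> k" "k \<le> n"
  shows "(\<Sum>j\<in>{i..<n}. t j) - (\<Sum>j\<in>{k..<n}. t j) = (\<Sum>j\<in>{i..<k}. t j)"
proof -
  have "(\<Sum>j\<in>{i..<n}. t j) = (\<Sum>j\<in>{i..<k}. t j) + (\<Sum>j\<in>{k..<n}. t j)"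
    using assms by (intro sum.atLeastLessThan_concat[symmetric]) auto
  then show ?thesis
    by simp
qed

lemma gap_potential_dominates:
  fixes a lam t :: "nat \<Rightarrow> real"
  assumes a: "\<forall>i j. i \<le> j \<longrightarrow> j < K \<longrightarrow> a j \<le> a i"
    and lam: "\<forall>i j. i \<le> j \<longrightarrow> j < K \<longrightarrow> lam j \<le> lam i" and m_nonneg: "0 \<le> m"
    and t_lower: "\<forall>j. Suc j < K \<longrightarrow> a (Suc j) * (lam j - lam (Suc j)) + m \<le> t j"
    and t_upper: "\<forall>j. Suc j < K \<longrightarrow> t j \<le> a j * (lam j - lam (Suc j)) - m"
    and ik: "i < K" "k < K" "i \<noteq> k"
  shows "a k * lam i \<le> (\<Sum>j\<in>{i..<K - 1}. t j) + (a k * lam k - m - (\<Sum>j\<in>{k..<K - 1}. t j))"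
proof (cases "i < k")
  case True
  have "a k * (lam i - lam k) + real (k - i) * m \<le> (\<Sum>j\<in>{i..<k}. t j)"
    using sum_gaps_lower[OF a lam t_lower, of i k] True ik by simp
  moreover have "m \<le> real (k - i) * m"
    using True m_nonneg by (simp add: mult_le_cancel_right1)
  ultimately show ?thesis
    using sum_atLeastLessThan_diff_tail[of i k "K - 1" t] True ik by (simp add: algebra_simps)
next
  case False
  then have ki: "k < i"
    using ik by simp
  have "(\<Sum>j\<in>{k..<i}. t j) \<le> a k * (lam k - lam i) - real (i - k) * m"
    using sum_gaps_upper[OF a lam t_upper, of k i] ki ik by simp
  moreover have "m \<le> real (i - k) * m"
    using ki m_nonneg by (simp add: mult_le_cancel_right1)
  ultimately show ?thesis
    using sum_atLeastLessThan_diff_tail[of k i "K - 1" t] ki ik by (simp add: algebra_simps)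
qed

text \<open>A feasible point of the dual of the linear program maximising
  \<open>\<Sum>i k. (a k * lam i - (if i = k then m else 0)) * P i k\<close> over doubly substochastic \<open>P\<close>,
  whose value is attained at \<open>P = 1\<close>. The potential \<open>u\<close> sums the midpoints \<open>t j\<close> between
  \<open>a (j + 1) * (lam j - lam (j + 1))\<close> and \<open>a j * (lam j - lam (j + 1))\<close>, which the gap
  condition keeps at distance \<open>m\<close> from both.\<close>
lemma spectral_gap_dual_certificate:
  fixes a lam :: "nat \<Rightarrow> real" and m :: real
  assumes a: "\<forall>i j. i \<le> j \<longrightarrow> j < K \<longrightarrow> a j \<le> a i" and a_nonneg: "\<forall>i<K. 0 \<le> a i"
    and lam: "\<forall>i j. i \<le> j \<longrightarrow> j < K \<longrightarrow> lam j \<le> lam i" and lam_nonneg: "\<forall>i<K. 0 \<le> lam i"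
    and m_nonneg: "0 \<le> m" and m_last: "m \<le> a (K - 1) * lam (K - 1)"
    and m_gap: "\<forall>j. Suc j < K \<longrightarrow> 2 * m \<le> (a j - a (Suc j)) * (lam j - lam (Suc j))"
  obtains u w :: "nat \<Rightarrow> real"
  where "\<forall>i<K. 0 \<le> u i" "\<forall>k<K. 0 \<le> w k"
    and "\<forall>i<K. \<forall>k<K. a k * lam i - (if i = k then m else 0) \<le> u i + w k"
    and "(\<Sum>i<K. u i) + (\<Sum>k<K. w k) = (\<Sum>k<K. a k * lam k - m)"
proof
  define t where "t j = (a j + a (Suc j)) * (lam j - lam (Suc j)) / 2" for j
  define u where "u i = (\<Sum>j\<in>{i..<K - 1}. t j)" for i
  define w where "w k = a k * lam k - m - u k" for k
  have t_mid: "t j = a (Suc j) * (lam j - lam (Suc j)) + (a j - a (Suc j)) * (lam j - lam (Suc j)) / 2"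
    "t j = a j * (lam j - lam (Suc j)) - (a j - a (Suc j)) * (lam j - lam (Suc j)) / 2" for j
    unfolding t_def by (simp_all add: field_simps)
  have t_lower: "\<forall>j. Suc j < K \<longrightarrow> a (Suc j) * (lam j - lam (Suc j)) + m \<le> t j"
    using m_gap by (auto simp: t_mid(1))
  have t_upper: "\<forall>j. Suc j < K \<longrightarrow> t j \<le> a j * (lam j - lam (Suc j)) - m"
    using m_gap by (auto simp: t_mid(2))
  have "0 \<le> t j" if "Suc j < K" for j
    unfolding t_def using a_nonneg lam that by (intro divide_nonneg_pos mult_nonneg_nonneg) auto
  then show "\<forall>i<K. 0 \<le> u i"
    unfolding u_def by (auto intro!: sum_nonneg)
  show "\<forall>k<K. 0 \<le> w k"
  proof (intro allI impI)
    fix k assume k: "k < K"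
    have "u k \<le> a k * (lam k - lam (K - 1)) - real (K - 1 - k) * m"
      using sum_gaps_upper[OF a lam t_upper, of k "K - 1"] k by (simp add: u_def)
    moreover have "0 \<le> real (K - 1 - k) * m"
      using m_nonneg by simp
    moreover have "a (K - 1) * lam (K - 1) \<le> a k * lam (K - 1)"
      using a lam_nonneg k by (intro mult_right_mono) auto
    ultimately show "0 \<le> w k"
      using m_last unfolding w_def by (simp add: algebra_simps)
  qed
  show "\<forall>i<K. \<forall>k<K. a k * lam i - (if i = k then m else 0) \<le> u i + w k"
    using gap_potential_dominates[OF a lam m_nonneg t_lower t_upper] by (auto simp: u_def w_def)
  show "(\<Sum>i<K. u i) + (\<Sum>k<K. w k) = (\<Sum>k<K. a k * lam k - m)"
    unfolding w_def by (simp add: sum_subtractf)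
qed

lemma doubly_substochastic_sum_le:
  fixes P C :: "nat \<Rightarrow> nat \<Rightarrow> real" and u w :: "nat \<Rightarrow> real"
  assumes P_nonneg: "\<forall>i<K. \<forall>k<K. 0 \<le> P i k"
    and rows: "\<forall>i<K. (\<Sum>k<K. P i k) \<le> 1" and cols: "\<forall>k<K. (\<Sum>i<K. P i k) \<le> 1"
    and u: "\<forall>i<K. 0 \<le> u i" and w: "\<forall>k<K. 0 \<le> w k"
    and C: "\<forall>i<K. \<forall>k<K. C i k \<le> u i + w k"
  shows "(\<Sum>k<K. \<Sum>i<K. C i k * P i k) \<le> (\<Sum>i<K. u i) + (\<Sum>k<K. w k)"
proof -
  have swap: "(\<Sum>k<K. \<Sum>i<K. u i * P i k) = (\<Sum>i<K. u i * (\<Sum>k<K. P i k))"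
    by (simp add: sum_distrib_left sum.swap[of "\<lambda>k i. u i * P i k"])
  have "(\<Sum>k<K. \<Sum>i<K. C i k * P i k) \<le> (\<Sum>k<K. \<Sum>i<K. (u i + w k) * P i k)"
    using C P_nonneg by (intro sum_mono mult_right_mono) auto
  also have "\<dots> = (\<Sum>i<K. u i * (\<Sum>k<K. P i k)) + (\<Sum>k<K. w k * (\<Sum>i<K. P i k))"
    unfolding distrib_right sum.distrib swap by (simp add: sum_distrib_left)
  also have "\<dots> \<le> (\<Sum>i<K. u i) + (\<Sum>k<K. w k)"
    using rows cols u w by (intro add_mono sum_mono mult_left_le) auto
  finally show ?thesis .
qed

lemma doubly_substochastic_spectral_gap:
  fixes a lam :: "nat \<Rightarrow> real" and P :: "nat \<Rightarrow> nat \<Rightarrow> real" and m :: real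
  assumes a: "\<forall>i j. i \<le> j \<longrightarrow> j < K \<longrightarrow> a j \<le> a i" and a_nonneg: "\<forall>i<K. 0 \<le> a i"
    and lam: "\<forall>i j. i \<le> j \<longrightarrow> j < K \<longrightarrow> lam j \<le> lam i" and lam_nonneg: "\<forall>i<K. 0 \<le> lam i"
    and m_nonneg: "0 \<le> m" and m_last: "m \<le> a (K - 1) * lam (K - 1)"
    and m_gap: "\<forall>j. Suc j < K \<longrightarrow> 2 * m \<le> (a j - a (Suc j)) * (lam j - lam (Suc j))"
    and P_nonneg: "\<forall>i<K. \<forall>k<K. 0 \<le> P i k"
    and rows: "\<forall>i<K. (\<Sum>k<K. P i k) \<le> 1" and cols: "\<forall>k<K. (\<Sum>i<K. P i k) \<le> 1"
  shows "(\<Sum>k<K. a k * (\<Sum>i<K. lam i * P i k)) + m * (\<Sum>k<K. 1 - P k k) \<le> (\<Sum>k<K. a k * lam k)"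
proof -
  obtain u w where u: "\<forall>i<K. 0 \<le> u i" and w: "\<forall>k<K. 0 \<le> w k"
    and C: "\<forall>i<K. \<forall>k<K. a k * lam i - (if i = k then m else 0) \<le> u i + w k"
    and cert_value: "(\<Sum>i<K. u i) + (\<Sum>k<K. w k) = (\<Sum>k<K. a k * lam k - m)"
    using spectral_gap_dual_certificate[OF a a_nonneg lam lam_nonneg m_nonneg m_last m_gap] .
  have diag: "(\<Sum>i<K. (if i = k then m else 0) * P i k) = m * P k k" if "k < K" for k
    using that by (simp add: if_distrib[of "\<lambda>x. x * P _ k"] cong: if_cong)
  have "(\<Sum>k<K. \<Sum>i<K. (a k * lam i - (if i = k then m else 0)) * P i k)
      = (\<Sum>k<K. a k * (\<Sum>i<K. lam i * P i k)) - m * (\<Sum>k<K. P k k)"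
    by (simp add: left_diff_distrib sum_subtractf diag sum_distrib_left mult.assoc)
  moreover have "(\<Sum>k<K. \<Sum>i<K. (a k * lam i - (if i = k then m else 0)) * P i k)
      \<le> (\<Sum>k<K. a k * lam k - m)"
    using doubly_substochastic_sum_le[OF P_nonneg rows cols u w C] cert_value by simp
  ultimately show ?thesis
    by (simp add: sum_subtractf algebra_simps)
qed

lemma Theta_sq: "\<forall>i<K. 0 \<le> lam i \<Longrightarrow> Theta K lam * Theta K lam = mat_diag K lam"
  unfolding Theta_def mat_diag_diag by (rule eq_matI) (auto simp: mat_diag_def)

lemma gfun_eq_sum:
  assumes Q: "dim_row Q = d" "dim_col Q = K" and X: "dim_row X = d" "dim_col X = K"
    and lam: "\<forall>i<K. 0 \<le> lam i"
  shows "gfun K Q lam a X = (\<Sum>k<K. a k * (\<Sum>i<K. lam i * ((Q\<^sup>T * X) $$ (i, k))\<^sup>2))"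
proof -
  define B where "B = Q\<^sup>T * X"
  have Bd: "dim_row B = K" "dim_col B = K"
    unfolding B_def using Q X by simp_all
  have "X\<^sup>T * Q * mat_diag K lam * Q\<^sup>T * X = (X\<^sup>T * Q) * mat_diag K lam * (Q\<^sup>T * X)"
    using Q X by (intro assoc_mult_mat_dim) simp_all
  also have "\<dots> = B\<^sup>T * mat_diag K lam * B"
    unfolding B_def using Q X by (simp add: transpose_mult_dim)
  finally have gB: "gfun K Q lam a X = mat_trace (B\<^sup>T * mat_diag K lam * B * mat_diag K a)"
    unfolding gfun_def Theta_sq[OF lam] by simp
  have BL: "B\<^sup>T * mat_diag K lam = mat K K (\<lambda>(i, j). B $$ (j, i) * lam j)"
    using Bd by (subst mat_diag_mult_right) auto
  have "(B\<^sup>T * mat_diag K lam * B * mat_diag K a) $$ (k, k) = a k * (\<Sum>i<K. lam i * (B $$ (i, k))\<^sup>2)"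
    if "k < K" for k
  proof -
    have "B\<^sup>T * mat_diag K lam * B * mat_diag K a
        = mat K K (\<lambda>(i, j). (B\<^sup>T * mat_diag K lam * B) $$ (i, j) * a j)"
      using Bd by (subst mat_diag_mult_right) auto
    then show ?thesis
      using that Bd unfolding BL
      by (simp add: index_mult_mat_sum power2_eq_square sum_distrib_left algebra_simps
          del: index_mult_mat(1))
  qed
  then show ?thesis
    unfolding gB mat_trace_def B_def[symmetric] using Bd by simp
qed

lemma gfun_self:
  assumes Q: "Q \<in> stiefel d K" and lam: "\<forall>i<K. 0 \<le> lam i"
  shows "gfun K Q lam a Q = (\<Sum>k<K. a k * lam k)"
proof -
  have "(\<Sum>i<K. lam i * ((1\<^sub>m K :: real mat) $$ (i, k))\<^sup>2) = lam k" if "k < K" for k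
  proof -
    have "(\<Sum>i<K. lam i * ((1\<^sub>m K :: real mat) $$ (i, k))\<^sup>2) = (\<Sum>i<K. if i = k then lam k else 0)"
      using that by (intro sum.cong) auto
    then show ?thesis
      using that by simp
  qed
  moreover have "dim_row Q = d" "dim_col Q = K" "Q\<^sup>T * Q = 1\<^sub>m K"
    using Q by (simp_all add: stiefel_iff)
  ultimately show ?thesis
    using gfun_eq_sum[of Q d K Q lam a] lam by simp
qed

lemma quadratic_growth_of_spectral_gaps:
  fixes a lam :: "nat \<Rightarrow> real" and m :: real
  assumes X: "X \<in> stiefel d K" and Q: "Q \<in> stiefel d K"
    and a: "\<forall>i j. i \<le> j \<longrightarrow> j < K \<longrightarrow> a j \<le> a i" and a_nonneg: "\<forall>i<K. 0 \<le> a i"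
    and lam: "\<forall>i j. i \<le> j \<longrightarrow> j < K \<longrightarrow> lam j \<le> lam i" and lam_nonneg: "\<forall>i<K. 0 \<le> lam i"
    and m_nonneg: "0 \<le> m" and m_last: "m \<le> a (K - 1) * lam (K - 1)"
    and m_gap: "\<forall>j. Suc j < K \<longrightarrow> 2 * m \<le> (a j - a (Suc j)) * (lam j - lam (Suc j))"
  shows "m / 2 * (dF K X Q)\<^sup>2 \<le> gfun K Q lam a Q - gfun K Q lam a X"
proof -
  define P where "P i k = ((Q\<^sup>T * X) $$ (i, k))\<^sup>2" for i k
  have rows: "\<forall>i<K. (\<Sum>k<K. P i k) \<le> 1" and cols: "\<forall>k<K. (\<Sum>i<K. P i k) \<le> 1"
    unfolding P_def using stiefel_cross_row_sq_sum_le[OF X Q] stiefel_cross_col_sq_sum_le[OF X Q] by auto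
  have P_nonneg: "\<forall>i<K. \<forall>k<K. 0 \<le> P i k"
    unfolding P_def by simp
  have "m / 2 * (dF K X Q)\<^sup>2 \<le> m / 2 * (2 * (\<Sum>k<K. 1 - P k k))"
    unfolding P_def using dF_sq_le_diag[OF X Q] m_nonneg by (intro mult_left_mono) auto
  also have "\<dots> \<le> gfun K Q lam a Q - gfun K Q lam a X"
    using doubly_substochastic_spectral_gap[OF a a_nonneg lam lam_nonneg m_nonneg m_last m_gap
        P_nonneg rows cols] gfun_self[OF Q lam_nonneg] gfun_eq_sum[of Q d K X lam a] X Q lam_nonneg
    unfolding P_def by (simp add: stiefel_iff)
  finally show ?thesis .
qed

section \<open>The Riemannian gradient at Givens rotations\<close>

lemma rgrad_mult_isometry:
  fixes U P Y :: "real mat"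
  assumes U: "dim_row U = d" "dim_col U = n" "U\<^sup>T * U = 1\<^sub>m n"
    and P: "dim_row P = n" "dim_col P = K" and Y: "dim_row Y = n" "dim_col Y = K"
  shows "rgrad d K (U * P) lam a (U * Y) = U * rgrad n K P lam a Y"
proof -
  have UtU: "U\<^sup>T * (U * M) = M" if "dim_row M = n" for M
    using U that by (simp add: assoc_mult_mat_dim[symmetric])
  note dist = assoc_mult_mat_dim transpose_mult_dim mult_smult_distrib_dim mult_smult_assoc_mat_dim
    mult_minus_distrib_mat_dim minus_mult_distrib_mat_dim UtU
  define G where "G = egrad K P lam a Y"
  have Gd: "dim_row G = n" "dim_col G = K"
    unfolding G_def using P by simp_all
  have EG: "egrad K (U * P) lam a (U * Y) = U * G"
    unfolding G_def egrad_def using U P Y by (simp add: dist)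
  define H where "H = G - Y * G\<^sup>T * Y"
  have Hd: "dim_row H = n" "dim_col H = K"
    unfolding H_def using Gd Y by simp_all
  have "egrad K (U * P) lam a (U * Y) - U * Y * (egrad K (U * P) lam a (U * Y))\<^sup>T * (U * Y) = U * H"
    unfolding EG H_def using U Y Gd by (simp add: dist)
  then show ?thesis
    unfolding rgrad_def G_def[symmetric] H_def[symmetric] using U Y Hd by (simp add: dist)
qed

definition embed_mat :: "nat \<Rightarrow> nat \<Rightarrow> real mat" where
  "embed_mat n K = mat n K (\<lambda>(i, j). if i = j then 1 else 0)"

lemma dim_embed_mat [simp]: "dim_row (embed_mat n K) = n" "dim_col (embed_mat n K) = K"
  unfolding embed_mat_def by simp_all

lemma index_mult_embed_mat:
  "i < dim_row M \<Longrightarrow> j < K \<Longrightarrow> K \<le> n \<Longrightarrow> dim_col M = n \<Longrightarrow>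
    (M * embed_mat n K) $$ (i, j) = M $$ (i, j)"
  by (simp add: index_mult_mat_sum embed_mat_def if_distrib[of "\<lambda>x. _ * x"] cong: if_cong
      del: index_mult_mat(1))

lemma index_embed_mat_mult:
  "i < n \<Longrightarrow> j < dim_col N \<Longrightarrow> dim_row N = K \<Longrightarrow>
    (embed_mat n K * N) $$ (i, j) = (if i < K then N $$ (i, j) else 0)"
  by (simp add: index_mult_mat_sum embed_mat_def if_distrib[of "\<lambda>x. x * _"] cong: if_cong
      del: index_mult_mat(1))

lemma index_transpose_embed_mat_mult:
  "i < K \<Longrightarrow> j < dim_col N \<Longrightarrow> K \<le> n \<Longrightarrow> dim_row N = n \<Longrightarrow>
    ((embed_mat n K)\<^sup>T * N) $$ (i, j) = N $$ (i, j)"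
  by (simp add: index_mult_mat_sum embed_mat_def if_distrib[of "\<lambda>x. x * _"] cong: if_cong
      del: index_mult_mat(1))

lemma embed_mat_stiefel:
  assumes "K \<le> n"
  shows "embed_mat n K \<in> stiefel n K"
proof -
  have "(embed_mat n K)\<^sup>T * embed_mat n K = 1\<^sub>m K"
  proof (rule eq_matI)
    fix i j assume "i < dim_row (1\<^sub>m K :: real mat)" "j < dim_col (1\<^sub>m K :: real mat)"
    then show "((embed_mat n K)\<^sup>T * embed_mat n K) $$ (i, j) = (1\<^sub>m K :: real mat) $$ (i, j)"
      using assms by (simp add: index_transpose_embed_mat_mult del: index_mult_mat(1)) (simp add: embed_mat_def)
  qed simp_all
  then show ?thesis
    by (simp add: stiefel_iff)
qed

lemma index_conj_mat_diag_sym: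
  fixes P :: "real mat"
  assumes "dim_col P = K" "i < dim_row P" "k < dim_row P"
  shows "(P * mat_diag K lam * P\<^sup>T) $$ (i, k) = (P * mat_diag K lam * P\<^sup>T) $$ (k, i)"
proof -
  let ?M = "P * mat_diag K lam * P\<^sup>T"
  have "?M\<^sup>T = ?M"
    using assms by (simp add: transpose_mult_dim transpose_mat_diag assoc_mult_mat_dim)
  moreover have "?M\<^sup>T $$ (i, k) = ?M $$ (k, i)"
    using assms by (simp del: index_mult_mat(1))
  ultimately show ?thesis
    by simp
qed

lemma index_rgrad_embed_mat:
  fixes P :: "real mat"
  assumes Kn: "K \<le> n" and P: "dim_row P = n" "dim_col P = K" and lam: "\<forall>i<K. 0 \<le> lam i"
    and p: "p < n" and q: "q < K"
  defines "S \<equiv> P * mat_diag K lam * P\<^sup>T"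
  shows "rgrad n K P lam a (embed_mat n K) $$ (p, q)
    = (if p < K then S $$ (p, q) * (a q - a p) else 2 * S $$ (p, q) * a q)"
proof -
  let ?E = "embed_mat n K"
  have Sd: "dim_row S = n" "dim_col S = n"
    unfolding S_def using P by simp_all
  have S_sym: "S $$ (i, k) = S $$ (k, i)" if "i < n" "k < n" for i k
    unfolding S_def using index_conj_mat_diag_sym[of P K i k lam] P that by simp
  define G where "G = egrad K P lam a ?E"
  have Gd: "dim_row G = n" "dim_col G = K"
    unfolding G_def using P by simp_all
  have G: "G $$ (i, k) = 2 * S $$ (i, k) * a k" if "i < n" "k < K" for i k
  proof -
    have "G = 2 \<cdot>\<^sub>m (S * ?E * mat_diag K a)"
      unfolding G_def egrad_def S_def Theta_sq[OF lam] ..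
    also have "S * ?E * mat_diag K a = mat n K (\<lambda>(i, k). (S * ?E) $$ (i, k) * a k)"
      using Sd by (intro mat_diag_mult_right) auto
    finally show ?thesis
      using that Sd Kn by (simp add: index_mult_embed_mat del: index_mult_mat(1))
  qed
  define H where "H = G - ?E * G\<^sup>T * ?E"
  have Hd: "dim_row H = n" "dim_col H = K"
    unfolding H_def using Gd by simp_all
  have H: "H $$ (i, k) = 2 * (S $$ (i, k) * a k - (if i < K then S $$ (i, k) * a i else 0))"
    if "i < n" "k < K" for i k
  proof -
    have "(?E * G\<^sup>T * ?E) $$ (i, k) = (if i < K then G $$ (k, i) else 0)"
      using that Kn Gd by (simp add: index_mult_embed_mat index_embed_mat_mult del: index_mult_mat(1))
    then show ?thesis
      unfolding H_def using that Gd Kn by (simp add: G S_sym algebra_simps del: index_mult_mat(1))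
  qed
  have "rgrad n K P lam a ?E = H - (1 / 2) \<cdot>\<^sub>m (?E * (?E\<^sup>T * H))"
    unfolding rgrad_def G_def[symmetric] H_def[symmetric] using Hd
    by (simp add: minus_mult_distrib_mat_dim mult_smult_assoc_mat_dim assoc_mult_mat_dim)
  then show ?thesis
    using p q Kn Hd
    by (simp add: H index_embed_mat_mult index_transpose_embed_mat_mult del: index_mult_mat(1))
      (simp add: field_simps)
qed

definition givens_mat :: "nat \<Rightarrow> nat \<Rightarrow> real \<Rightarrow> real \<Rightarrow> real mat" where
  "givens_mat n j c s = mat n n (\<lambda>(p, q).
     if p = q then (if p = j \<or> p = Suc j then c else 1)
     else if p = Suc j \<and> q = j then s else if p = j \<and> q = Suc j then - s else 0)"

lemma dim_givens_mat [simp]: "dim_row (givens_mat n j c s) = n" "dim_col (givens_mat n j c s) = n"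
  unfolding givens_mat_def by simp_all

lemma transpose_givens_mat: "(givens_mat n j c s)\<^sup>T = givens_mat n j c (- s)"
  unfolding givens_mat_def by (rule eq_matI) auto

lemma sum_lessThan_three_support:
  fixes f :: "nat \<Rightarrow> real"
  assumes "Suc j < n" "i < n" "\<And>p. p < n \<Longrightarrow> p \<noteq> i \<Longrightarrow> p \<noteq> j \<Longrightarrow> p \<noteq> Suc j \<Longrightarrow> f p = 0"
  shows "(\<Sum>p<n. f p) = f j + f (Suc j) + (if i = j \<or> i = Suc j then 0 else f i)"
proof -
  have "(\<Sum>p<n. f p) = (\<Sum>p\<in>{j, Suc j} \<union> (if i = j \<or> i = Suc j then {} else {i}). f p)"
    using assms by (intro sum.mono_neutral_right) auto
  then show ?thesis
    by (cases "i = j \<or> i = Suc j") auto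
qed

lemma givens_mat_conj_entry:
  assumes "Suc j < n" "p < n" "q < n" "p \<noteq> q"
  shows "(\<Sum>r<n. givens_mat n j c s $$ (r, p) * \<mu> r * givens_mat n j c s $$ (r, q))
    = (if (p = j \<and> q = Suc j) \<or> (p = Suc j \<and> q = j) then - (c * s * (\<mu> j - \<mu> (Suc j))) else 0)"
  using assms by (subst sum_lessThan_three_support[of j n p]) (auto simp: givens_mat_def algebra_simps)

lemma givens_mat_orthogonal:
  assumes j: "Suc j < n" and cs: "c\<^sup>2 + s\<^sup>2 = 1"
  shows "(givens_mat n j c s)\<^sup>T * givens_mat n j c s = 1\<^sub>m n"
proof (rule eq_matI)
  fix p q assume "p < dim_row (1\<^sub>m n :: real mat)" "q < dim_col (1\<^sub>m n :: real mat)"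
  then have pq: "p < n" "q < n"
    by simp_all
  have "((givens_mat n j c s)\<^sup>T * givens_mat n j c s) $$ (p, q)
      = (\<Sum>r<n. givens_mat n j c s $$ (r, p) * 1 * givens_mat n j c s $$ (r, q))"
    using pq by (simp add: index_mult_mat_sum del: index_mult_mat(1))
  also have "\<dots> = (1\<^sub>m n :: real mat) $$ (p, q)"
  proof (cases "p = q")
    case True
    then show ?thesis
      using j pq cs by (subst sum_lessThan_three_support[of j n p])
        (auto simp: givens_mat_def power2_eq_square)
  next
    case False
    then show ?thesis
      using j pq givens_mat_conj_entry[of j n p q c s "\<lambda>_. 1"] by simp
  qed
  finally show "((givens_mat n j c s)\<^sup>T * givens_mat n j c s) $$ (p, q) = (1\<^sub>m n :: real mat) $$ (p, q)" .
qed simp_all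

lemma givens_mat_stiefel: "Suc j < n \<Longrightarrow> c\<^sup>2 + s\<^sup>2 = 1 \<Longrightarrow> givens_mat n j c s \<in> stiefel n n"
  by (simp add: stiefel_iff givens_mat_orthogonal)

lemma givens_mat_mult_transpose:
  "Suc j < n \<Longrightarrow> c\<^sup>2 + s\<^sup>2 = 1 \<Longrightarrow> givens_mat n j c s * (givens_mat n j c s)\<^sup>T = 1\<^sub>m n"
  using givens_mat_orthogonal[of j n c "- s"] by (simp add: transpose_givens_mat)

lemma frob_rgrad_givens_test_point:
  assumes U: "U \<in> stiefel d n" and j: "Suc j < n" and Kn: "K \<le> n" and cs: "c\<^sup>2 + s\<^sup>2 = 1"
  shows "frob (rgrad d K (U * embed_mat n K) lam a (U * (givens_mat n j c s * embed_mat n K)))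
    = frob (rgrad n K ((givens_mat n j c s)\<^sup>T * embed_mat n K) lam a (embed_mat n K))"
proof -
  let ?G = "givens_mat n j c s" and ?E = "embed_mat n K"
  have Ud: "dim_row U = d" "dim_col U = n" "U\<^sup>T * U = 1\<^sub>m n"
    using U by (simp_all add: stiefel_iff)
  have "?G * (?G\<^sup>T * ?E) = ?E"
    using givens_mat_mult_transpose[OF j cs] by (simp add: assoc_mult_mat_dim[symmetric])
  then have "rgrad n K ?E lam a (?G * ?E) = ?G * rgrad n K (?G\<^sup>T * ?E) lam a ?E"
    using rgrad_mult_isometry[of ?G n n "?G\<^sup>T * ?E" K ?E lam a] givens_mat_orthogonal[OF j cs] by simp
  moreover have "rgrad d K (U * ?E) lam a (U * (?G * ?E)) = U * rgrad n K ?E lam a (?G * ?E)"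
    using Ud by (intro rgrad_mult_isometry) simp_all
  ultimately show ?thesis
    using Ud givens_mat_orthogonal[OF j cs]
    by (simp add: frob_mult_isometry[where d = d and n = n] frob_mult_isometry[where d = n and n = n])
qed

lemma givens_embed_conj_entry:
  fixes j :: nat and c s :: real
  assumes Kn: "K \<le> n" and p: "p < n" and q: "q < n"
  defines "P \<equiv> (givens_mat n j c s)\<^sup>T * embed_mat n K"
  shows "(P * mat_diag K lam * P\<^sup>T) $$ (p, q)
    = (\<Sum>r<n. givens_mat n j c s $$ (r, p) * (if r < K then lam r else 0) * givens_mat n j c s $$ (r, q))"
proof -
  let ?G = "givens_mat n j c s"
  have P_entry: "P $$ (i, r) = ?G $$ (r, i)" if "i < n" "r < K" for i r
    unfolding P_def using that Kn by (simp add: index_mult_embed_mat del: index_mult_mat(1))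
  have Pd: "dim_row P = n" "dim_col P = K"
    unfolding P_def by simp_all
  have "P * mat_diag K lam = mat n K (\<lambda>(i, r). P $$ (i, r) * lam r)"
    using Pd by (intro mat_diag_mult_right) auto
  then have "(P * mat_diag K lam * P\<^sup>T) $$ (p, q) = (\<Sum>r<K. P $$ (p, r) * lam r * P $$ (q, r))"
    using p q Pd by (simp add: index_mult_mat_sum del: index_mult_mat(1))
  also have "\<dots> = (\<Sum>r<K. ?G $$ (r, p) * lam r * ?G $$ (r, q))"
    using p q by (intro sum.cong) (simp_all add: P_entry)
  also have "\<dots> = (\<Sum>r<K. ?G $$ (r, p) * (if r < K then lam r else 0) * ?G $$ (r, q))"
    by (rule sum.cong) auto
  also have "\<dots> = (\<Sum>r<n. ?G $$ (r, p) * (if r < K then lam r else 0) * ?G $$ (r, q))"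
    using Kn by (intro sum.mono_neutral_left) auto
  finally show ?thesis .
qed

lemma frob_sq_rgrad_givens:
  fixes j :: nat and c s :: real
  assumes j: "Suc j < n" "j < K" and Kn: "K \<le> n" and lam: "\<forall>i<K. 0 \<le> lam i"
  shows "(frob (rgrad n K ((givens_mat n j c s)\<^sup>T * embed_mat n K) lam a (embed_mat n K)))\<^sup>2
    = (if Suc j < K then 2 * (c * s * (lam j - lam (Suc j)) * (a j - a (Suc j)))\<^sup>2
       else (2 * c * s * lam j * a j)\<^sup>2)"
proof -
  let ?P = "(givens_mat n j c s)\<^sup>T * embed_mat n K"
  let ?R = "rgrad n K ?P lam a (embed_mat n K)"
  define \<sigma> where "\<sigma> = - (c * s * (lam j - (if Suc j < K then lam (Suc j) else 0)))"
  define A where "A = \<sigma> * (a (Suc j) - a j)"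
  define B where "B = (if Suc j < K then \<sigma> * (a j - a (Suc j)) else 2 * \<sigma> * a j)"
  have S: "(?P * mat_diag K lam * ?P\<^sup>T) $$ (p, q)
      = (if (p = j \<and> q = Suc j) \<or> (p = Suc j \<and> q = j) then \<sigma> else 0)"
    if "p < n" "q < n" "p \<noteq> q" for p q
    using givens_mat_conj_entry[OF j(1) that] j
    unfolding givens_embed_conj_entry[OF Kn that(1,2)] \<sigma>_def by simp
  have R: "?R $$ (p, q) = (if p = j \<and> q = Suc j then A else if p = Suc j \<and> q = j then B else 0)"
    if "p < n" "q < K" for p q
    using index_rgrad_embed_mat[OF Kn _ _ lam that, of ?P a] S[of p q] that j Kn
    by (cases "p = q") (auto simp: A_def B_def)
  have "(frob ?R)\<^sup>2 = (\<Sum>p<n. \<Sum>q<K. if p = j \<and> q = Suc j then A\<^sup>2 else if p = Suc j \<and> q = j then B\<^sup>2 else 0)"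
    unfolding frob_sq using Kn by (intro sum.cong refl) (simp_all add: R)
  also have "\<dots> = (if Suc j < K then A\<^sup>2 else 0) + B\<^sup>2"
    using j by (subst sum_lessThan_three_support[of j n j]) (auto cong: if_cong)
  finally show ?thesis
    unfolding A_def B_def \<sigma>_def by (simp add: power2_eq_square algebra_simps)
qed

lemma givens_test_point_stiefel:
  "U \<in> stiefel d n \<Longrightarrow> Suc j < n \<Longrightarrow> K \<le> n \<Longrightarrow> c\<^sup>2 + s\<^sup>2 = 1 \<Longrightarrow>
    U * (givens_mat n j c s * embed_mat n K) \<in> stiefel d K"
  by (rule stiefel_mult[OF _ stiefel_mult[OF givens_mat_stiefel embed_mat_stiefel]])

lemma dF_sq_givens_test_point:
  assumes U: "U \<in> stiefel d n" and j: "Suc j < n" "j < K" and Kn: "K \<le> n"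
    and cs: "c\<^sup>2 + s\<^sup>2 = 1" and c: "0 \<le> c"
  shows "(dF K (U * (givens_mat n j c s * embed_mat n K)) (U * embed_mat n K))\<^sup>2
    = (if Suc j < K then 4 else 2) * (1 - c)"
proof -
  let ?G = "givens_mat n j c s" and ?E = "embed_mat n K"
  have Ud: "dim_row U = d" "dim_col U = n" "U\<^sup>T * U = 1\<^sub>m n"
    using U by (simp_all add: stiefel_iff)
  have "(U * ?E)\<^sup>T * (U * (?G * ?E)) = ?E\<^sup>T * (?G * ?E)"
    using Ud by (intro transpose_mult_isometry) simp_all
  then have diag: "((U * ?E)\<^sup>T * (U * (?G * ?E))) $$ (k, k) = (if k = j \<or> k = Suc j then c else 1)"
    if "k < K" for k
    using that Kn
    by (simp add: index_transpose_embed_mat_mult index_mult_embed_mat givens_mat_def del: index_mult_mat(1))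
  have "(\<Sum>k<K. 2 - 2 * \<bar>((U * ?E)\<^sup>T * (U * (?G * ?E))) $$ (k, k)\<bar>)
      = (\<Sum>k<K. (if k = j then 2 - 2 * c else 0) + (if k = Suc j then 2 - 2 * c else 0))"
    using c by (intro sum.cong refl) (auto simp: diag simp del: index_mult_mat(1))
  also have "\<dots> = (if Suc j < K then 4 else 2) * (1 - c)"
    using j by (simp add: sum.distrib)
  finally show ?thesis
    using dF_sq[OF givens_test_point_stiefel[OF U j(1) Kn cs] stiefel_mult[OF U embed_mat_stiefel[OF Kn]]]
    by simp
qed

section \<open>Spectral gaps from the error bound\<close>

lemma rotation_error_bound_imp_one_le:
  fixes c s x :: real
  assumes cs: "c\<^sup>2 + s\<^sup>2 = 1" and c: "0 \<le> c" "c < 1" and x: "0 \<le> x"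
    and bound: "2 * (1 - c) \<le> (c * s * x)\<^sup>2"
  shows "1 \<le> x"
proof -
  have "c\<^sup>2 * (1 + c) \<le> 1 * 2"
    using c cs by (intro mult_mono) (auto simp: power_le_one)
  then have "c\<^sup>2 * (1 + c) * (1 - c) \<le> 2 * (1 - c)"
    using c by (intro mult_right_mono) auto
  moreover have "(c * s)\<^sup>2 = c\<^sup>2 * (1 + c) * (1 - c)"
  proof -
    have "s\<^sup>2 = 1 - c\<^sup>2"
      using cs by simp
    then have "(c * s)\<^sup>2 = c\<^sup>2 * (1 - c\<^sup>2)"
      by (simp only: power_mult_distrib)
    then show ?thesis
      by (simp add: algebra_simps power2_eq_square)
  qed
  ultimately have "(c * s * x)\<^sup>2 \<le> 2 * (1 - c) * x\<^sup>2"
    unfolding power_mult_distrib[of "c * s"] by (intro mult_right_mono) auto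
  then have "2 * (1 - c) * 1 \<le> 2 * (1 - c) * x\<^sup>2"
    using bound by simp
  then have "1\<^sup>2 \<le> x\<^sup>2"
    using c by simp
  then show ?thesis
    using x by (rule power2_le_imp_le)
qed

lemma error_bound_at_givens_test_point:
  fixes U :: "real mat"
  assumes U: "U \<in> stiefel d (Suc K)" and j: "j < K" and lam_nonneg: "\<forall>i<K. 0 \<le> lam i"
    and cs: "c\<^sup>2 + s\<^sup>2 = 1" and c: "0 \<le> c" "c < 1" and \<delta>: "0 \<le> \<delta>" "4 * (1 - c) \<le> \<delta>\<^sup>2"
    and bound: "\<forall>X\<in>stiefel d K. dF K X (U * embed_mat (Suc K) K) \<le> \<delta> \<longrightarrow>
      dF K X (U * embed_mat (Suc K) K) \<le> \<eta> * frob (rgrad d K (U * embed_mat (Suc K) K) lam a X)"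
  shows "(if Suc j < K then 4 else 2) * (1 - c)
    \<le> \<eta>\<^sup>2 * (if Suc j < K then 2 * (c * s * (lam j - lam (Suc j)) * (a j - a (Suc j)))\<^sup>2
            else (2 * c * s * lam j * a j)\<^sup>2)"
proof -
  let ?E = "embed_mat (Suc K) K" and ?G = "givens_mat (Suc K) j c s"
  define X where "X = U * (?G * ?E)"
  have X: "X \<in> stiefel d K"
    unfolding X_def using U j cs by (intro givens_test_point_stiefel) simp_all
  have dF_X: "(dF K X (U * ?E))\<^sup>2 = (if Suc j < K then 4 else 2) * (1 - c)"
    unfolding X_def using U j c cs by (intro dF_sq_givens_test_point) simp_all
  have "(dF K X (U * ?E))\<^sup>2 \<le> \<delta>\<^sup>2"
    unfolding dF_X using \<delta> c by simp
  then have "dF K X (U * ?E) \<le> \<delta>"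
    using \<delta>(1) by (rule power2_le_imp_le)
  then have "dF K X (U * ?E) \<le> \<eta> * frob (rgrad d K (U * ?E) lam a X)"
    using bound X by blast
  then have "(dF K X (U * ?E))\<^sup>2 \<le> (\<eta> * frob (rgrad d K (U * ?E) lam a X))\<^sup>2"
    using dF_nonneg by (rule power_mono)
  also have "\<dots> = \<eta>\<^sup>2 * (frob (rgrad (Suc K) K (?G\<^sup>T * ?E) lam a ?E))\<^sup>2"
    unfolding X_def using U j cs by (simp add: frob_rgrad_givens_test_point power_mult_distrib)
  finally show ?thesis
    unfolding dF_X using frob_sq_rgrad_givens[of j "Suc K" K lam c s a] j lam_nonneg by simp
qed

lemma spectral_gaps_of_error_bound:
  fixes Q :: "real mat" and lam a :: "nat \<Rightarrow> real" and \<delta> \<eta> :: real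
  assumes Q: "Q \<in> stiefel d K" and K: "0 < K" "K < d"
    and a: "\<forall>i j. i \<le> j \<longrightarrow> j < K \<longrightarrow> a j \<le> a i" and a_nonneg: "\<forall>i<K. 0 \<le> a i"
    and lam: "\<forall>i j. i \<le> j \<longrightarrow> j < K \<longrightarrow> lam j \<le> lam i" and lam_nonneg: "\<forall>i<K. 0 \<le> lam i"
    and \<delta>: "0 < \<delta>" "\<delta> < 1" and \<eta>: "0 \<le> \<eta>"
    and bound: "\<forall>X\<in>stiefel d K. dF K X Q \<le> \<delta> \<longrightarrow> dF K X Q \<le> \<eta> * frob (rgrad d K Q lam a X)"
  shows "1 \<le> 2 * \<eta> * (a (K - 1) * lam (K - 1))"
    and "\<forall>j. Suc j < K \<longrightarrow> 1 \<le> \<eta> * ((a j - a (Suc j)) * (lam j - lam (Suc j)))"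
proof -
  obtain U where U: "U \<in> stiefel d (Suc K)" and UQ: "\<forall>i<d. \<forall>k<K. U $$ (i, k) = Q $$ (i, k)"
    using stiefel_extend_col[OF Q K(2)] by blast
  have "Q = U * embed_mat (Suc K) K"
    using U Q UQ by (intro eq_matI) (auto simp: stiefel_iff index_mult_embed_mat simp del: index_mult_mat(1))
  note bound = bound[unfolded this]
  define c where "c = 1 - \<delta>\<^sup>2 / 4"
  define s where "s = sqrt (1 - c\<^sup>2)"
  have c: "0 \<le> c" "c < 1"
    unfolding c_def using \<delta> power_less_one_iff[of \<delta> 2] by simp_all
  then have cs: "c\<^sup>2 + s\<^sup>2 = 1"
    unfolding s_def by (simp add: power_le_one)
  have \<delta>_c: "0 \<le> \<delta>" "4 * (1 - c) \<le> \<delta>\<^sup>2"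
    unfolding c_def using \<delta> by simp_all
  note test = error_bound_at_givens_test_point[OF U _ lam_nonneg cs c \<delta>_c bound]
  show "1 \<le> 2 * \<eta> * (a (K - 1) * lam (K - 1))"
  proof (rule rotation_error_bound_imp_one_le[OF cs c])
    show "0 \<le> 2 * \<eta> * (a (K - 1) * lam (K - 1))"
      using \<eta> a_nonneg lam_nonneg K by simp
    show "2 * (1 - c) \<le> (c * s * (2 * \<eta> * (a (K - 1) * lam (K - 1))))\<^sup>2"
      using test[of "K - 1"] K by (simp add: power2_eq_square algebra_simps)
  qed
  show "\<forall>j. Suc j < K \<longrightarrow> 1 \<le> \<eta> * ((a j - a (Suc j)) * (lam j - lam (Suc j)))"
  proof (intro allI impI)
    fix j assume j: "Suc j < K"
    show "1 \<le> \<eta> * ((a j - a (Suc j)) * (lam j - lam (Suc j)))"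
    proof (rule rotation_error_bound_imp_one_le[OF cs c])
      show "0 \<le> \<eta> * ((a j - a (Suc j)) * (lam j - lam (Suc j)))"
        using \<eta> a lam j by simp
      have "(c * s * (\<eta> * ((a j - a (Suc j)) * (lam j - lam (Suc j)))))\<^sup>2
          = \<eta>\<^sup>2 * (c * s * (lam j - lam (Suc j)) * (a j - a (Suc j)))\<^sup>2"
        by (simp add: power2_eq_square algebra_simps)
      then show "2 * (1 - c) \<le> (c * s * (\<eta> * ((a j - a (Suc j)) * (lam j - lam (Suc j)))))\<^sup>2"
        using test[of j] j by simp
    qed
  qed
qed

lemma strict_antimono_imp_antimono:
  fixes f :: "nat \<Rightarrow> real"
  assumes "\<forall>i j. i < j \<and> j < K \<longrightarrow> f j < f i"
  shows "\<forall>i j. i \<le> j \<longrightarrow> j < K \<longrightarrow> f j \<le> f i"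
  using assms by (metis le_less less_imp_le)

theorem lemma6:
  fixes d K :: nat and Q :: "real mat" and lam a :: "nat \<Rightarrow> real"
    and \<delta>3 \<eta> :: real
  assumes "1 \<le> K" and "K < d"
    and "Q \<in> stiefel d K"
    and "\<forall>i j. i < j \<and> j < K \<longrightarrow> lam j < lam i"
    and "\<forall>i<K. 0 < lam i"
    and "\<forall>i j. i < j \<and> j < K \<longrightarrow> a j < a i"
    and "\<forall>i<K. 0 < a i"
    and "0 < \<delta>3" and "\<delta>3 < sqrt 2 / 2"
    and "0 < \<eta>"
    and "\<forall>X\<in>stiefel d K. dF K X Q \<le> \<delta>3 \<longrightarrow>
           dF K X Q \<le> \<eta> * frob (rgrad d K Q lam a X)"
  shows "\<exists>\<beta>1. 0 < \<beta>1 \<and> \<beta>1 < 2/3 * \<delta>3 \<and>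
           (\<forall>X\<in>stiefel d K. dF K X Q \<le> \<beta>1 \<longrightarrow>
              gfun K Q lam a Q - gfun K Q lam a X \<ge> 1 / (4 * \<eta>) * (dF K X Q)\<^sup>2)"
proof -
  note Q = assms(3) and \<delta>3 = assms(8,9) and \<eta> = assms(10)
  have lam: "\<forall>i j. i \<le> j \<longrightarrow> j < K \<longrightarrow> lam j \<le> lam i" and lam_nonneg: "\<forall>i<K. 0 \<le> lam i"
    and a: "\<forall>i j. i \<le> j \<longrightarrow> j < K \<longrightarrow> a j \<le> a i" and a_nonneg: "\<forall>i<K. 0 \<le> a i"
    using assms(4-7) strict_antimono_imp_antimono[OF assms(4)] strict_antimono_imp_antimono[OF assms(6)]
    by (auto simp: less_imp_le)
  have "sqrt 2 / 2 < (1 :: real)"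
    using real_sqrt_less_mono[of 2 4] by simp
  then have gaps: "1 \<le> 2 * \<eta> * (a (K - 1) * lam (K - 1))"
      "\<forall>j. Suc j < K \<longrightarrow> 1 \<le> \<eta> * ((a j - a (Suc j)) * (lam j - lam (Suc j)))"
    using spectral_gaps_of_error_bound[OF Q _ assms(2) a a_nonneg lam lam_nonneg assms(8) _ _ assms(11)]
      assms(1) \<delta>3 \<eta> by simp_all
  define m where "m = 1 / (2 * \<eta>)"
  have m: "0 \<le> m" "m \<le> a (K - 1) * lam (K - 1)"
    "\<forall>j. Suc j < K \<longrightarrow> 2 * m \<le> (a j - a (Suc j)) * (lam j - lam (Suc j))"
    using gaps \<eta> by (auto simp: m_def field_simps)
  show ?thesis
  proof (intro exI[of _ "\<delta>3 / 3"] conjI ballI impI)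
    fix X assume X: "X \<in> stiefel d K" \<comment> \<open>the growth bound holds without the radius constraint\<close>
    show "1 / (4 * \<eta>) * (dF K X Q)\<^sup>2 \<le> gfun K Q lam a Q - gfun K Q lam a X"
      using quadratic_growth_of_spectral_gaps[OF X Q a a_nonneg lam lam_nonneg m] by (simp add: m_def)
  qed (use \<delta>3 in \<open>simp_all\<close>)
qed

end
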